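(* Let $F\in\mathbb{R}^{n\times n}$, $G\in\mathbb{R}^{n\times m}$, $K\in\mathbb{R}^{m\times n}$, $L\in\mathbb{R}^{n\times p}$ with $\rho[F]<1$ and $\rho[F+GK]<1$, let $\Sigma\in\mathbb{R}^{p\times p}$ be symmetric positive definite and $\alpha>0$. Consider $e_{k+1}^\delta=Fe_k^\delta-L\Sigma^{1/2}\bar\delta_k$ and $x_{k+1}^\delta=(F+GK)x_k^\delta-GKe_k^\delta$ for $k\ge k^*$, with $e_{k^*}^\delta=x_{k^*}^\delta=\mathbf{0}$ and inputs satisfying $\bar\delta_k^T\bar\delta_k\leq\alpha$ for all $k$. Then every value $x_k^\delta$, $k\ge k^*$, attainable under such inputs lies in $$\mathcal{E}_x^\delta=\bigoplus_{k=1}^{\infty}\mathcal{E}\big(\alpha\,H_kL\Sigma L^TH_k^T\big),\qquad H_k=(F+GK)^k-F^k.$$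
   Context: $\Sigma^{1/2}$ is the symmetric positive definite square root of $\Sigma$; $\rho[\cdot]$ is the spectral radius. For a symmetric positive semidefinite matrix $\mathcal{Q}$, $\mathcal{E}(\mathcal{Q})=\{\mathcal{Q}^{1/2}u:\ u^Tu\le 1\}$ (for positive definite $\mathcal{Q}$ this equals $\{\mu:\mu^T\mathcal{Q}^{-1}\mu\le1\}$). $\oplus$ denotes the Minkowski sum, and the infinite sum $\bigoplus_k\mathcal{E}_k$ is the set of all convergent sums $\sum_k y_k$ with $y_k\in\mathcal{E}_k$. *)

theory Defs
  imports "HOL-Analysis.Analysis"
begin

primrec matpow :: "('a::semiring_1)^'n^'n \<Rightarrow> nat \<Rightarrow> 'a^'n^'n" where
  "matpow A 0 = mat 1"
| "matpow A (Suc k) = A ** matpow A k"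

text \<open>Spectral radius of a real square matrix: the largest modulus of a
  (possibly complex) eigenvalue, i.e. of a root of the characteristic polynomial.\<close>
definition complexify :: "real^'n^'n \<Rightarrow> complex^'n^'n" where
  "complexify A = (\<chi> i j. complex_of_real (A $ i $ j))"

definition spectral_radius :: "real^'n^'n \<Rightarrow> real" where
  "spectral_radius A = Max {cmod l | l. det (mat l - complexify A) = 0}"

definition symmetric_mat :: "real^'n^'n \<Rightarrow> bool" where
  "symmetric_mat A \<longleftrightarrow> transpose A = A"

definition pos_semidef :: "real^'n^'n \<Rightarrow> bool" where
  "pos_semidef A \<longleftrightarrow> symmetric_mat A \<and> (\<forall>v. 0 \<le> v \<bullet> (A *v v))"

definition pos_def :: "real^'n^'n \<Rightarrow> bool" where
  "pos_def A \<longleftrightarrow> symmetric_mat A \<and> (\<forall>v. v \<noteq> 0 \<longrightarrow> 0 < v \<bullet> (A *v v))"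

definition psd_sqrt :: "real^'n^'n \<Rightarrow> real^'n^'n" where
  "psd_sqrt A = (THE R. pos_semidef R \<and> R ** R = A)"

definition ellipsoid :: "real^'n^'n \<Rightarrow> (real^'n) set" where
  "ellipsoid Q = {psd_sqrt Q *v u | u. u \<bullet> u \<le> 1}"

definition minkowski_infsum :: "(nat \<Rightarrow> 'a::real_normed_vector set) \<Rightarrow> 'a set" where
  "minkowski_infsum E = {s. \<exists>y. (\<forall>k. y k \<in> E (Suc k)) \<and> y sums s}"

end

theory Submission
  imports Defs
begin

(* Unrolling both recursions from the zero initial state gives
   x (k0 + d) = sum_{j<d} H_j L Sigma^(1/2) delta_(k0+d-1-j), and H_0 = 0.  Each term with j >= 1
   lies in E(alpha H_j L Sigma L^T H_j^T), because M Sigma^(1/2) maps the ball of radius sqrt alpha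
   into E(alpha M Sigma M^T).  Padding with zeros turns this finite sum into a convergent series.  The square roots are provided by the
   spectral theorem for symmetric matrices, obtained by maximising the Rayleigh quotient. *)

lemma transpose_inner:
  fixes A :: "real^'n^'m"
  shows "(transpose A *v x) \<bullet> y = x \<bullet> (A *v y)"
  by (simp add: dot_lmul_matrix)

lemma symmetric_mat_iff_inner:
  fixes A :: "real^'n^'n"
  shows "symmetric_mat A \<longleftrightarrow> (\<forall>x y. (A *v x) \<bullet> y = x \<bullet> (A *v y))"
proof
  assume "symmetric_mat A"
  then show "\<forall>x y. (A *v x) \<bullet> y = x \<bullet> (A *v y)"
    by (metis transpose_inner symmetric_mat_def)
next
  assume adj: "\<forall>x y. (A *v x) \<bullet> y = x \<bullet> (A *v y)"
  have "(transpose A *v x - A *v x) \<bullet> y = 0" for x y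
    using adj transpose_inner[of A x y] by (simp add: inner_diff_left del: transpose_matrix_vector)
  then have "transpose A *v x = A *v x" for x
    by (metis eq_iff_diff_eq_0 inner_eq_zero_iff)
  then show "symmetric_mat A"
    unfolding symmetric_mat_def by (simp add: matrix_eq del: transpose_matrix_vector)
qed

lemma symmetric_mat_inner:
  fixes A :: "real^'n^'n"
  assumes "symmetric_mat A"
  shows "(A *v x) \<bullet> y = x \<bullet> (A *v y)"
  using assms symmetric_mat_iff_inner by blast

lemma pos_def_imp_pos_semidef: "pos_def A \<Longrightarrow> pos_semidef A"
  unfolding pos_def_def pos_semidef_def by (metis inner_zero_left order.order_iff_strict)

lemma pos_semidef_mult_transpose:
  fixes N :: "real^'p^'n"
  shows "pos_semidef (N ** transpose N)"
proof -
  have "v \<bullet> ((N ** transpose N) *v v) = (transpose N *v v) \<bullet> (transpose N *v v)" for v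
    using transpose_inner[of N v "transpose N *v v"]
    by (simp add: matrix_vector_mul_assoc[symmetric] del: transpose_matrix_vector)
  then show ?thesis
    unfolding pos_semidef_def symmetric_mat_def by (simp add: matrix_transpose_mul)
qed

lemma linear_term_zero_if_quadratic_bound:
  fixes a c :: real
  assumes "\<And>t. t\<^sup>2 * c \<le> 2 * t * a" and "c \<le> 0" and "a \<ge> 0"
  shows "a = 0"
proof (rule ccontr)
  assume "a \<noteq> 0"
  then have a: "a > 0" using assms by simp
  define s where "s = a / (\<bar>c\<bar> + 1)"
  have s: "s > 0" using a by (simp add: s_def add_pos_nonneg)
  have "(-s)\<^sup>2 * c \<le> 2 * (-s) * a" using assms(1) .
  then have "2 * s * a \<le> s\<^sup>2 * \<bar>c\<bar>" using assms(2) by (simp add: power2_eq_square)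
  then have "2 * a \<le> s * \<bar>c\<bar>" using s by (simp add: power2_eq_square mult.assoc)
  moreover have "s * \<bar>c\<bar> < a"
  proof -
    have "s * \<bar>c\<bar> = a * (\<bar>c\<bar> / (\<bar>c\<bar> + 1))" by (simp add: s_def)
    also have "\<dots> < a * 1" using a by (intro mult_strict_left_mono) auto
    finally show ?thesis by simp
  qed
  ultimately show False using a by linarith
qed

text \<open>A maximiser of the Rayleigh quotient on the unit sphere of an invariant subspace is an
  eigenvector: perturbing it along \<open>u = \<lambda> v - A v\<close> would otherwise increase the quotient.\<close>

lemma symmetric_invariant_subspace_eigenvector:
  fixes A :: "real^'n^'n"
  assumes sym: "symmetric_mat A" and V: "subspace V" and inv: "\<And>x. x \<in> V \<Longrightarrow> A *v x \<in> V"
    and nontrivial: "V \<noteq> {0}"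
  obtains v where "v \<in> V" "norm v = 1" "A *v v = (v \<bullet> (A *v v)) *\<^sub>R v"
proof -
  define S where "S = sphere (0::real^'n) 1 \<inter> V"
  have "compact S"
    unfolding S_def by (intro compact_Int_closed compact_sphere closed_subspace V)
  obtain w where w: "w \<in> V" "w \<noteq> 0" using nontrivial V subspace_0 by blast
  then have "w /\<^sub>R norm w \<in> S" using V by (simp add: S_def subspace_scale)
  then have "S \<noteq> {}" by blast
  moreover have "continuous_on S (\<lambda>x. x \<bullet> (A *v x))" by (intro continuous_intros)
  ultimately obtain v where v: "v \<in> S" and vmax: "\<And>x. x \<in> S \<Longrightarrow> x \<bullet> (A *v x) \<le> v \<bullet> (A *v v)"
    using continuous_attains_sup[OF \<open>compact S\<close>] by blast
  define l where "l = v \<bullet> (A *v v)"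
  have vV: "v \<in> V" and nv: "norm v = 1" using v by (auto simp: S_def)
  have vv: "v \<bullet> v = 1" using nv by (simp add: norm_eq_1)
  have bound: "x \<bullet> (A *v x) \<le> l * (x \<bullet> x)" if "x \<in> V" for x
  proof (cases "x = 0")
    case False
    have "x /\<^sub>R norm x \<in> S" using False that V by (simp add: S_def subspace_scale)
    then have "(x /\<^sub>R norm x) \<bullet> (A *v (x /\<^sub>R norm x)) \<le> l" using vmax l_def by blast
    then have "(x \<bullet> (A *v x)) / (norm x)\<^sup>2 \<le> l"
      by (simp add: matrix_vector_mult_scaleR power2_eq_square divide_inverse mult_ac)
    then show ?thesis using False by (simp add: divide_le_eq power2_norm_eq_inner)
  qed simp
  define u where "u = l *\<^sub>R v - A *v v"
  have uV: "u \<in> V" unfolding u_def using vV inv V by (intro subspace_diff subspace_scale) auto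
  define a where "a = u \<bullet> u"
  define c where "c = u \<bullet> (A *v u) - l * (u \<bullet> u)"
  have "c \<le> 0" using bound[OF uV] by (simp add: c_def)
  have quadratic_bound: "t\<^sup>2 * c \<le> 2 * t * a" for t
  proof -
    have "v + t *\<^sub>R u \<in> V" using uV vV V by (intro subspace_add subspace_scale) auto
    from bound[OF this]
    have "(v + t *\<^sub>R u) \<bullet> (A *v (v + t *\<^sub>R u)) \<le> l * ((v + t *\<^sub>R u) \<bullet> (v + t *\<^sub>R u))" .
    moreover have "v \<bullet> (A *v u) = u \<bullet> (A *v v)"
      using symmetric_mat_inner[OF sym, of v u] by (simp add: inner_commute)
    moreover have "u \<bullet> (A *v v) = l * (u \<bullet> v) - a"
      by (simp add: a_def u_def inner_diff_right inner_diff_left inner_commute algebra_simps)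
    ultimately show ?thesis
      by (simp add: algebra_simps inner_add_left inner_add_right vv l_def[symmetric] c_def
          power2_eq_square inner_commute)
  qed
  have "a = 0"
    by (rule linear_term_zero_if_quadratic_bound[OF quadratic_bound \<open>c \<le> 0\<close>]) (simp add: a_def)
  then have "A *v v = l *\<^sub>R v" by (simp add: a_def u_def)
  then show ?thesis using that vV nv l_def by blast
qed

definition orthonormal_eigenvectors :: "real^'n^'n \<Rightarrow> (real^'n) set \<Rightarrow> bool" where
  "orthonormal_eigenvectors A B \<longleftrightarrow> finite B \<and> pairwise orthogonal B \<and>
     (\<forall>b\<in>B. norm b = 1 \<and> A *v b = (b \<bullet> (A *v b)) *\<^sub>R b)"

lemma symmetric_invariant_subspace_orthonormal_eigenbasis:
  fixes A :: "real^'n^'n"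
  assumes sym: "symmetric_mat A"
  shows "subspace V \<Longrightarrow> (\<And>x. x \<in> V \<Longrightarrow> A *v x \<in> V) \<Longrightarrow>
         \<exists>B. B \<subseteq> V \<and> orthonormal_eigenvectors A B \<and> span B = V"
proof (induction "dim V" arbitrary: V rule: less_induct)
  case less
  show ?case
  proof (cases "V = {0}")
    case True
    then show ?thesis by (intro exI[of _ "{}"]) (auto simp: orthonormal_eigenvectors_def)
  next
    case False
    obtain v where vV: "v \<in> V" and nv: "norm v = 1" and ev: "A *v v = (v \<bullet> (A *v v)) *\<^sub>R v"
      using symmetric_invariant_subspace_eigenvector[OF sym less.prems False] by blast
    have vv: "v \<bullet> v = 1" using nv by (simp add: norm_eq_1)
    define W where "W = {x \<in> V. v \<bullet> x = 0}"
    have sW: "subspace W"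
      using less.prems(1) unfolding W_def subspace_def by (auto simp: inner_add_right)
    have iW: "A *v x \<in> W" if "x \<in> W" for x
    proof -
      have "v \<bullet> (A *v x) = (A *v v) \<bullet> x" using symmetric_mat_inner[OF sym, of v x] by simp
      also have "\<dots> = (v \<bullet> (A *v v)) * (v \<bullet> x)" by (subst ev) simp
      finally show ?thesis using that less.prems(2) by (simp add: W_def)
    qed
    have "W \<subseteq> V" "v \<notin> W" using vv by (auto simp: W_def)
    then have "W \<subset> V" using vV by blast
    then have "dim W < dim V"
      using dim_psubset sW less.prems(1) by (metis span_eq_iff)
    then obtain BW where BW: "BW \<subseteq> W" "orthonormal_eigenvectors A BW" "span BW = W"
      using less.hyps[OF _ sW iW] by blast
    have "span (insert v BW) = V"
    proof
      show "span (insert v BW) \<subseteq> V"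
        using BW(1) vV less.prems(1) by (intro span_minimal) (auto simp: W_def)
      show "V \<subseteq> span (insert v BW)"
      proof
        fix x assume x: "x \<in> V"
        have "x - (v \<bullet> x) *\<^sub>R v \<in> W" using x vV less.prems(1) vv
          by (auto simp: W_def inner_diff_right subspace_diff subspace_scale)
        then have "x - (v \<bullet> x) *\<^sub>R v \<in> span (insert v BW)"
          using BW(3) span_mono[of BW "insert v BW"] by auto
        then show "x \<in> span (insert v BW)"
          by (metis diff_add_cancel span_add span_base span_scale insertI1)
      qed
    qed
    moreover have "orthonormal_eigenvectors A (insert v BW)"
      using BW(1,2) nv ev unfolding orthonormal_eigenvectors_def
      by (auto simp: pairwise_insert W_def orthogonal_def inner_commute)
    ultimately show ?thesis using BW(1) vV by (intro exI[of _ "insert v BW"]) (auto simp: W_def)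
  qed
qed

lemma symmetric_orthonormal_eigenbasis:
  fixes A :: "real^'n^'n"
  assumes "symmetric_mat A"
  obtains B where "orthonormal_eigenvectors A B" "span B = UNIV"
  using symmetric_invariant_subspace_orthonormal_eigenbasis[OF assms, of UNIV] by auto

lemma orthonormal_eigenvectors_coeff:
  assumes B: "orthonormal_eigenvectors A B" and "b \<in> B"
  shows "b \<bullet> (\<Sum>b'\<in>B. f b' *\<^sub>R b') = f b"
proof -
  have "b \<bullet> (\<Sum>b'\<in>B. f b' *\<^sub>R b') = (\<Sum>b'\<in>B. f b' * (b \<bullet> b'))"
    by (simp add: inner_sum_right)
  also have "\<dots> = (\<Sum>b'\<in>B. if b' = b then f b' else 0)"
    using B \<open>b \<in> B\<close> unfolding orthonormal_eigenvectors_def pairwise_def orthogonal_def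
    by (intro sum.cong) (auto simp: norm_eq_1)
  also have "\<dots> = f b" using B \<open>b \<in> B\<close> by (simp add: orthonormal_eigenvectors_def)
  finally show ?thesis .
qed

lemma orthonormal_eigenbasis_expansion:
  assumes B: "orthonormal_eigenvectors A B" "span B = UNIV"
  shows "x = (\<Sum>b\<in>B. (b \<bullet> x) *\<^sub>R b)"
proof -
  define y where "y = x - (\<Sum>b\<in>B. (b \<bullet> x) *\<^sub>R b)"
  have "b \<bullet> y = 0" if "b \<in> B" for b
    using orthonormal_eigenvectors_coeff[OF B(1) that, of "\<lambda>b. b \<bullet> x"]
    by (simp add: y_def inner_diff_right)
  then have "orthogonal y b" if "b \<in> B" for b
    using that by (simp add: orthogonal_def inner_commute)
  then have "orthogonal y y" using orthogonal_to_span[of y B y] B(2) by auto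
  then show ?thesis by (simp add: y_def orthogonal_def)
qed

lemma pos_semidef_root_on_eigenvector:
  fixes R A :: "real^'n^'n"
  assumes R: "pos_semidef R" and RR: "R ** R = A" and ev: "A *v b = l *\<^sub>R b" and l: "l \<ge> 0"
  shows "R *v b = sqrt l *\<^sub>R b"
proof -
  have symR: "symmetric_mat R" using R by (simp add: pos_semidef_def)
  have RRv: "R *v (R *v y) = A *v y" for y using RR by (simp add: matrix_vector_mul_assoc)
  show ?thesis
  proof (cases "l = 0")
    case True
    have "(R *v b) \<bullet> (R *v b) = b \<bullet> (R *v (R *v b))" using symmetric_mat_inner[OF symR] by simp
    also have "\<dots> = 0" using RRv ev True by simp
    finally show ?thesis using True by simp
  next
    case False
    then have sl: "sqrt l > 0" using l by simp
    define u where "u = R *v b - sqrt l *\<^sub>R b"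
    have "R *v u + sqrt l *\<^sub>R u = A *v b - l *\<^sub>R b"
      unfolding u_def using l
      by (simp add: RRv[symmetric] matrix_vector_mult_diff_distrib matrix_vector_mult_scaleR algebra_simps)
    then have "u \<bullet> (R *v u) + sqrt l * (u \<bullet> u) = 0"
      using ev by (metis diff_self inner_add_right inner_scaleR_right inner_zero_right)
    moreover have "u \<bullet> (R *v u) \<ge> 0" using R by (simp add: pos_semidef_def)
    ultimately have "u \<bullet> u = 0" using sl by (smt (verit) inner_ge_zero mult_pos_pos)
    then show ?thesis by (simp add: u_def)
  qed
qed

lemma pos_semidef_unique_sqrt:
  fixes A :: "real^'n^'n"
  assumes A: "pos_semidef A"
  shows "\<exists>!R. pos_semidef R \<and> R ** R = A"
proof -
  obtain B where B: "orthonormal_eigenvectors A B" "span B = UNIV"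
    using symmetric_orthonormal_eigenbasis A pos_semidef_def by blast
  define lam where "lam b = b \<bullet> (A *v b)" for b
  have lam: "lam b \<ge> 0" for b using A by (simp add: lam_def pos_semidef_def)
  have evb: "A *v b = lam b *\<^sub>R b" if "b \<in> B" for b
    using B(1) that by (simp add: orthonormal_eigenvectors_def lam_def)
  have expand: "x = (\<Sum>b\<in>B. (b \<bullet> x) *\<^sub>R b)" for x by (rule orthonormal_eigenbasis_expansion[OF B])
  define f where "f x = (\<Sum>b\<in>B. (sqrt (lam b) * (b \<bullet> x)) *\<^sub>R b)" for x
  have "linear f"
    by (rule linearI) (simp_all add: f_def inner_add_right algebra_simps sum.distrib scaleR_sum_right)
  define R0 where "R0 = matrix f"
  have R0v: "R0 *v x = f x" for x
    unfolding R0_def using matrix_vector_mul(2)[OF \<open>linear f\<close>] by metis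
  have bilinear: "f x \<bullet> y = (\<Sum>b\<in>B. sqrt (lam b) * ((b \<bullet> x) * (b \<bullet> y)))" for x y
    by (simp add: f_def inner_sum_left mult.assoc)
  have "pos_semidef R0"
    unfolding pos_semidef_def symmetric_mat_iff_inner
  proof (intro conjI allI)
    show "(R0 *v x) \<bullet> y = x \<bullet> (R0 *v y)" for x y
      by (simp add: R0v bilinear inner_commute[of x] mult.commute)
    show "0 \<le> v \<bullet> (R0 *v v)" for v
      by (simp add: R0v bilinear inner_commute[of v] lam sum_nonneg)
  qed
  moreover have "R0 ** R0 = A"
  proof (subst matrix_eq, intro allI)
    fix x
    have "(R0 ** R0) *v x = f (f x)" by (simp add: R0v matrix_vector_mul_assoc[symmetric])
    also have "\<dots> = (\<Sum>b\<in>B. (b \<bullet> x) *\<^sub>R (A *v b))"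
      unfolding f_def[of "f x"] using orthonormal_eigenvectors_coeff[OF B(1), of _ "\<lambda>b. sqrt (lam b) * (b \<bullet> x)"]
      by (intro sum.cong) (simp_all add: f_def evb lam mult.assoc[symmetric])
    also have "\<dots> = A *v x" by (subst (2) expand) (simp add: vec.sum matrix_vector_mult_scaleR)
    finally show "(R0 ** R0) *v x = A *v x" .
  qed
  moreover have "R = R0" if R: "pos_semidef R" "R ** R = A" for R
  proof (subst matrix_eq, intro allI)
    fix x
    have "R *v x = (\<Sum>b\<in>B. (b \<bullet> x) *\<^sub>R (R *v b))"
      by (subst expand) (simp add: vec.sum matrix_vector_mult_scaleR)
    also have "\<dots> = f x" unfolding f_def
      by (rule sum.cong) (simp_all add: pos_semidef_root_on_eigenvector[OF R evb lam] mult.commute)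
    finally show "R *v x = R0 *v x" by (simp add: R0v)
  qed
  ultimately show ?thesis by blast
qed

lemma
  fixes A :: "real^'n^'n"
  assumes "pos_semidef A"
  shows pos_semidef_psd_sqrt: "pos_semidef (psd_sqrt A)"
    and psd_sqrt_square: "psd_sqrt A ** psd_sqrt A = A"
  using theI'[OF pos_semidef_unique_sqrt[OF assms]] unfolding psd_sqrt_def by auto

text \<open>Split \<open>w = N\<^sup>T y + q\<close> with \<open>N q = 0\<close>; then \<open>N w = R (R y)\<close> for \<open>R = (N N\<^sup>T)\<^sup>1\<^sup>/\<^sup>2\<close>,
  and \<open>|R y| = |N\<^sup>T y| \<le> |w|\<close>.\<close>

lemma unit_ball_image_in_ellipsoid:
  fixes N :: "real^'p^'n"
  assumes w: "w \<bullet> w \<le> 1"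
  shows "N *v w \<in> ellipsoid (N ** transpose N)"
proof -
  define Q where "Q = N ** transpose N"
  define R where "R = psd_sqrt Q"
  have R: "pos_semidef R" "R ** R = Q"
    using pos_semidef_psd_sqrt psd_sqrt_square pos_semidef_mult_transpose by (auto simp: R_def Q_def)
  define T where "T = range ((*v) (transpose N))"
  have "subspace T"
    unfolding T_def by (metis linear_subspace_image matrix_vector_mul_linear subspace_UNIV)
  obtain p q where p: "p \<in> span T" and q: "\<And>z. z \<in> span T \<Longrightarrow> orthogonal q z" and wpq: "w = p + q"
    using orthogonal_subspace_decomp_exists[of T w] by metis
  have "p \<in> T" using p \<open>subspace T\<close> by (metis span_eq_iff)
  then obtain y where y: "p = transpose N *v y" unfolding T_def by blast
  have "(N *v q) \<bullet> z = 0" for z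
    using q[of "transpose N *v z"] transpose_inner[of N z q]
    by (simp add: T_def span_base orthogonal_def inner_commute del: transpose_matrix_vector)
  then have "N *v q = 0" by (metis inner_eq_zero_iff)
  then have "N *v w = R *v (R *v y)"
    by (simp add: wpq y matrix_vector_right_distrib R(2) Q_def matrix_vector_mul_assoc
        del: transpose_matrix_vector)
  moreover have "(R *v y) \<bullet> (R *v y) = p \<bullet> p"
    using symmetric_mat_inner[of R "R *v y" y] R transpose_inner[of N y "transpose N *v y"]
    by (simp add: pos_semidef_def y Q_def matrix_vector_mul_assoc inner_commute
        del: transpose_matrix_vector)
  moreover have "p \<bullet> p \<le> w \<bullet> w"
    using q[OF p] by (simp add: wpq orthogonal_def inner_add_left inner_add_right inner_commute)
  ultimately show ?thesis
    using w unfolding ellipsoid_def R_def Q_def by fastforce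
qed

lemma linear_recurrence_from_zero:
  fixes A :: "real^'n^'n"
  assumes "z k0 = 0" and "\<And>k. k \<ge> k0 \<Longrightarrow> z (Suc k) = A *v z k + c k"
  shows "z (k0 + d) = (\<Sum>j<d. matpow A j *v c (k0 + d - 1 - j))"
proof (induction d)
  case (Suc d)
  have "z (k0 + Suc d) = c (k0 + d) + (\<Sum>j<d. matpow A (Suc j) *v c (k0 + d - 1 - j))"
    using assms(2)[of "k0 + d"] by (simp add: Suc vec.sum matrix_vector_mul_assoc)
  also have "\<dots> = (\<Sum>j<Suc d. matpow A j *v c (k0 + Suc d - 1 - j))"
    by (subst sum.lessThan_Suc_shift) simp
  finally show ?case .
qed (simp add: assms(1))

lemma bounded_input_in_ellipsoid:
  fixes M :: "real^'p^'n" and \<Sigma> :: "real^'p^'p"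
  assumes "pos_semidef \<Sigma>" and "\<alpha> > 0" and "\<delta> \<bullet> \<delta> \<le> \<alpha>"
  shows "(M ** psd_sqrt \<Sigma>) *v \<delta> \<in> ellipsoid (\<alpha> *\<^sub>R (M ** \<Sigma> ** transpose M))"
proof -
  define S where "S = psd_sqrt \<Sigma>"
  define N where "N = sqrt \<alpha> *\<^sub>R (M ** S)"
  have "transpose S = S" "X ** S ** S = X ** \<Sigma>" for X :: "real^'p^'n"
    using pos_semidef_psd_sqrt[OF assms(1)] psd_sqrt_square[OF assms(1)]
    by (simp_all add: S_def pos_semidef_def symmetric_mat_def) (metis matrix_mul_assoc)
  then have gram: "N ** transpose N = \<alpha> *\<^sub>R (M ** \<Sigma> ** transpose M)"
    using assms(2) by (simp add: N_def transpose_scalar matrix_scalar_ac scalar_matrix_assoc[symmetric]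
        matrix_transpose_mul matrix_mul_assoc)
  have "N *v ((1 / sqrt \<alpha>) *\<^sub>R \<delta>) = (1 / sqrt \<alpha>) *\<^sub>R (sqrt \<alpha> *\<^sub>R ((M ** S) *v \<delta>))"
    by (simp only: N_def matrix_vector_mult_scaleR scaleR_matrix_vector_assoc)
  then have input: "(M ** S) *v \<delta> = N *v ((1 / sqrt \<alpha>) *\<^sub>R \<delta>)"
    using assms(2) by simp
  have "((1 / sqrt \<alpha>) *\<^sub>R \<delta>) \<bullet> ((1 / sqrt \<alpha>) *\<^sub>R \<delta>) \<le> 1"
    using assms(2,3) by (simp add: divide_le_eq)
  from unit_ball_image_in_ellipsoid[OF this, of N] show ?thesis
    by (simp only: gram input[symmetric] S_def)
qed

lemma finite_sum_in_minkowski_infsum: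
  assumes "\<And>k. 0 \<in> E k" and "\<And>j. j < n \<Longrightarrow> y j \<in> E (Suc j)"
  shows "(\<Sum>j<n. y j) \<in> minkowski_infsum E"
proof -
  define y' where "y' j = (if j < n then y j else 0)" for j
  have "y' sums (\<Sum>j<n. y' j)" by (rule sums_finite) (auto simp: y'_def)
  moreover have "y' j \<in> E (Suc j)" for j using assms by (simp add: y'_def)
  moreover have "(\<Sum>j<n. y' j) = (\<Sum>j<n. y j)" by (simp add: y'_def)
  ultimately show ?thesis unfolding minkowski_infsum_def by auto
qed

theorem theorem3:
  fixes F :: "real^'n^'n" and G :: "real^'m^'n" and K :: "real^'n^'m"
    and L :: "real^'p^'n" and \<Sigma> :: "real^'p^'p" and \<alpha> :: real
    and k0 :: nat and e x :: "nat \<Rightarrow> real^'n" and \<delta> :: "nat \<Rightarrow> real^'p"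
  assumes "spectral_radius F < 1"
    and "spectral_radius (F + G ** K) < 1"
    and "pos_def \<Sigma>"
    and "\<alpha> > 0"
    and "e k0 = 0" and "x k0 = 0"
    and "\<And>k. k \<ge> k0 \<Longrightarrow> e (Suc k) = F *v e k - (L ** psd_sqrt \<Sigma>) *v \<delta> k"
    and "\<And>k. k \<ge> k0 \<Longrightarrow> x (Suc k) = (F + G ** K) *v x k - (G ** K) *v e k"
    and "\<And>k. \<delta> k \<bullet> \<delta> k \<le> \<alpha>"
  shows "\<forall>k\<ge>k0. x k \<in> minkowski_infsum (\<lambda>j.
           ellipsoid (\<alpha> *\<^sub>R ((matpow (F + G ** K) j - matpow F j) ** L ** \<Sigma> **
                               transpose L ** transpose (matpow (F + G ** K) j - matpow F j))))"
proof -
  define H where "H j = matpow (F + G ** K) j - matpow F j" for j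
  define c where "c k = (L ** psd_sqrt \<Sigma>) *v \<delta> k" for k
  define E where "E j = ellipsoid (\<alpha> *\<^sub>R (H j ** L ** \<Sigma> ** transpose L ** transpose (H j)))" for j
  have e: "e (k0 + d) = (\<Sum>j<d. matpow F j *v - c (k0 + d - 1 - j))" for d
    by (rule linear_recurrence_from_zero) (simp_all add: assms(5,7) c_def)
  have x_minus_e: "(x - e) (k0 + d) = (\<Sum>j<d. matpow (F + G ** K) j *v c (k0 + d - 1 - j))" for d
    by (rule linear_recurrence_from_zero)
      (simp_all add: assms(5-8) c_def matrix_vector_mult_diff_distrib matrix_vector_mult_add_rdistrib)
  have x: "x (k0 + d) = (\<Sum>j<d. H j *v c (k0 + d - 1 - j))" for d
    using e[of d] x_minus_e[of d]
    by (simp add: H_def matrix_vector_mult_diff_rdistrib sum_subtractf vec.neg sum_negf eq_diff_eq)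
  have H_in_E: "H j *v c i \<in> E j" for i j
    using bounded_input_in_ellipsoid[OF pos_def_imp_pos_semidef[OF assms(3)] assms(4,9), of "H j ** L"]
    by (simp add: E_def c_def matrix_vector_mul_assoc matrix_mul_assoc matrix_transpose_mul)
  have zero_in_E: "0 \<in> E j" for j
    unfolding E_def ellipsoid_def by (auto intro!: exI[of _ 0])
  have "H 0 = 0" by (simp add: H_def)
  have "x (k0 + d) \<in> minkowski_infsum E" for d
  proof (cases d)
    case 0
    then show ?thesis
      using finite_sum_in_minkowski_infsum[of E 0] zero_in_E assms(6) by simp
  next
    case (Suc d')
    have "x (k0 + d) = (\<Sum>j<d'. H (Suc j) *v c (k0 + d' - 1 - j))"
      using x[of d] unfolding Suc sum.lessThan_Suc_shift by (simp add: \<open>H 0 = 0\<close>)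
    moreover have "(\<Sum>j<d'. H (Suc j) *v c (k0 + d' - 1 - j)) \<in> minkowski_infsum E"
      by (rule finite_sum_in_minkowski_infsum) (simp_all add: zero_in_E H_in_E)
    ultimately show ?thesis by simp
  qed
  then show ?thesis
    unfolding H_def[symmetric] E_def[symmetric] by (auto dest: le_Suc_ex)
qed

end
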